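(* Let $H$ be a Hardy field, $f\in H^\times$, $g\in H$, and consider $A(y)=fy''+f'y'+gy$. Suppose that some (equivalently every) germ $F\in\mathcal C^1$ with $F'=f^{-1}$ satisfies $F>\mathbb R$, and some (equivalently every) germ $G\in\mathcal C^1$ with $G'=g$ satisfies $G>\mathbb R$. Then $A(y)=0$ for some oscillating $y\in\mathcal C^{<\infty}$.
   Context: Germs at $+\infty$; $\mathcal C^n$ germs of $n$-times continuously differentiable real functions on intervals $(a,+\infty)$, $\mathcal C^{<\infty}=\bigcap_n\mathcal C^n$. A Hardy field is a subfield of $\mathcal C^{<\infty}$ closed under derivation. For germs, $F>\mathbb R$ means $F(t)\to+\infty$ as $t\to+\infty$. A germ $y$ oscillates if $y(t)=0$ for arbitrarily large $t$ and $y(t)\neq0$ for arbitrarily large $t$. *)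

theory Defs
  imports "HOL-Analysis.Analysis"
begin

text \<open>Germs at +infinity are represented by total functions real => real;
  all properties below only depend on the function on some tail (a, +infinity).\<close>

definition C_on :: "nat \<Rightarrow> real \<Rightarrow> (real \<Rightarrow> real) \<Rightarrow> bool" where
  "C_on n a f \<longleftrightarrow>
     (\<forall>k<n. \<forall>t>a. ((deriv ^^ k) f has_real_derivative (deriv ^^ Suc k) f t) (at t))
     \<and> continuous_on {a<..} ((deriv ^^ n) f)"

definition germ_C :: "nat \<Rightarrow> (real \<Rightarrow> real) \<Rightarrow> bool" where
  "germ_C n f \<longleftrightarrow> (\<exists>a. C_on n a f)"

definition germ_Cinf :: "(real \<Rightarrow> real) \<Rightarrow> bool" where
  "germ_Cinf f \<longleftrightarrow> (\<forall>n. germ_C n f)"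

text \<open>A Hardy field, given as the set of all representatives of its germs:
  a subfield of the ring of C^{<infinity} germs that is closed under derivation.\<close>
definition hardy_field :: "(real \<Rightarrow> real) set \<Rightarrow> bool" where
  "hardy_field H \<longleftrightarrow>
     (\<forall>f\<in>H. germ_Cinf f)
   \<and> (\<forall>f g. f \<in> H \<longrightarrow> eventually (\<lambda>t. f t = g t) at_top \<longrightarrow> g \<in> H)
   \<and> (\<lambda>_. 0) \<in> H \<and> (\<lambda>_. 1) \<in> H
   \<and> (\<forall>f\<in>H. \<forall>g\<in>H. (\<lambda>t. f t + g t) \<in> H \<and> (\<lambda>t. f t * g t) \<in> H)
   \<and> (\<forall>f\<in>H. (\<lambda>t. - f t) \<in> H)
   \<and> (\<forall>f\<in>H. \<not> eventually (\<lambda>t. f t = 0) at_top \<longrightarrow> (\<lambda>t. inverse (f t)) \<in> H)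
   \<and> (\<forall>f\<in>H. deriv f \<in> H)"

definition oscillates :: "(real \<Rightarrow> real) \<Rightarrow> bool" where
  "oscillates y \<longleftrightarrow> frequently (\<lambda>t. y t = 0) at_top \<and> frequently (\<lambda>t. y t \<noteq> 0) at_top"

end

theory Submission
  imports Defs
begin

text \<open>Writing \<open>z = f y'\<close>, the equation \<open>f y'' + f' y' + g y = 0\<close> becomes the linear system
  \<open>y' = z / f\<close>, \<open>z' = - g y\<close>. Picard iteration yields a solution with \<open>y(t\<^sub>0) = 1\<close> on a whole
  tail, and it is smooth because \<open>1/f\<close> and \<open>g\<close> are. By a Gronwall estimate \<open>y\<^sup>2 + z\<^sup>2\<close> never
  vanishes, so \<open>y\<close> is not eventually zero. If \<open>y\<close> had no zeros on a tail, \<open>v = z / y\<close> would solve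
  the Riccati equation \<open>v' = - g - v\<^sup>2 / f\<close>. Then \<open>v + G + R\<close> is constant for \<open>R = \<integral> v\<^sup>2 / f \<ge> 0\<close>,
  so \<open>v \<le> - (1 + R)\<close> once \<open>G\<close> is large, hence \<open>(1 + R)' \<ge> (1 + R)\<^sup>2 / f\<close>, i.e.
  \<open>(- 1 / (1 + R))' \<ge> 1 / f = F'\<close>, and \<open>F\<close> would be bounded. Positivity of \<open>f\<close> on a tail, used
  here, holds because \<open>f\<close> cannot change sign while \<open>F\<close>, an antiderivative of \<open>1/f\<close>, tends to
  \<open>+\<infinity>\<close>.\<close>

section \<open>Smoothness on tails\<close>

lemma C_on_0: "C_on 0 a h \<longleftrightarrow> continuous_on {a<..} h"
  by (simp add: C_on_def)

lemma C_on_Suc: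
  "C_on (Suc n) a h \<longleftrightarrow>
     (\<forall>t>a. (h has_real_derivative deriv h t) (at t)) \<and> C_on n a (deriv h)"
proof -
  have "(deriv ^^ Suc k) h = (deriv ^^ k) (deriv h)" for k
    by (simp add: funpow_Suc_right del: funpow.simps)
  then show ?thesis
    unfolding C_on_def All_less_Suc2 by (simp del: funpow.simps)
qed

lemma C_on_cong:
  assumes "\<And>t. t > a \<Longrightarrow> h t = k t"
  shows "C_on n a h \<longleftrightarrow> C_on n a k"
  using assms
proof (induction n arbitrary: h k)
  case 0
  then show ?case by (simp add: C_on_0) (rule continuous_on_cong; simp)
next
  case (Suc n)
  have ev: "eventually (\<lambda>x. h x = k x) (nhds t)" if "t > a" for t
    using eventually_nhds_in_open[of "{a<..}" t] that Suc.prems by (auto elim!: eventually_mono)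
  have "deriv h t = deriv k t" if "t > a" for t
    using ev[OF that] by (rule deriv_cong_ev) simp
  moreover have "(h has_real_derivative d) (at t) \<longleftrightarrow> (k has_real_derivative d) (at t)"
    if "t > a" for t d
    using ev[OF that] Suc.prems[OF that] by (intro DERIV_cong_ev) auto
  ultimately show ?case
    using Suc.IH[of "deriv h" "deriv k"] by (simp add: C_on_Suc)
qed

lemma C_on_mono: "C_on n a h \<Longrightarrow> a \<le> b \<Longrightarrow> C_on n b h"
  unfolding C_on_def by (auto intro: continuous_on_subset)

lemma germ_C_iff_eventually: "germ_C n h \<longleftrightarrow> eventually (\<lambda>a. C_on n a h) at_top"
  unfolding germ_C_def eventually_at_top_linorder by (blast intro: C_on_mono)

lemma C_on_imp_continuous_on: "C_on n a h \<Longrightarrow> continuous_on {a<..} h"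
  by (cases n) (auto simp: C_on_0 C_on_Suc intro!: continuous_at_imp_continuous_on DERIV_isCont)

lemma C_on_SucD: "C_on (Suc n) a h \<Longrightarrow> C_on n a h"
proof (induction n arbitrary: h)
  case 0
  then show ?case by (simp add: C_on_0 C_on_imp_continuous_on)
next
  case (Suc n)
  then show ?case by (subst C_on_Suc) (auto simp: C_on_Suc[of "Suc n"])
qed

lemma C_on_Suc_of_derivative:
  assumes "\<And>t. t > a \<Longrightarrow> (h has_real_derivative h' t) (at t)" and "C_on n a h'"
  shows "C_on (Suc n) a h"
proof -
  have "deriv h t = h' t" if "t > a" for t
    using assms(1)[OF that] by (rule DERIV_imp_deriv)
  with assms show ?thesis
    using C_on_cong[of a "deriv h" h' n] by (simp add: C_on_Suc)
qed

lemma C_on_add: "C_on n a u \<Longrightarrow> C_on n a v \<Longrightarrow> C_on n a (\<lambda>t. u t + v t)"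
proof (induction n arbitrary: u v)
  case 0
  then show ?case by (simp add: C_on_0 continuous_on_add)
next
  case (Suc n)
  then show ?case
    by (intro C_on_Suc_of_derivative[where h'="\<lambda>t. deriv u t + deriv v t"])
       (auto simp: C_on_Suc intro!: derivative_eq_intros)
qed

lemma C_on_mult: "C_on n a u \<Longrightarrow> C_on n a v \<Longrightarrow> C_on n a (\<lambda>t. u t * v t)"
proof (induction n arbitrary: u v)
  case 0
  then show ?case by (simp add: C_on_0 continuous_on_mult)
next
  case (Suc n)
  then have "C_on n a (\<lambda>t. deriv u t * v t + u t * deriv v t)"
    using C_on_SucD[of n a u] C_on_SucD[of n a v]
    by (intro C_on_add Suc.IH) (auto simp: C_on_Suc)
  with Suc.prems show ?case
    by (intro C_on_Suc_of_derivative[where h'="\<lambda>t. deriv u t * v t + u t * deriv v t"])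
       (auto simp: C_on_Suc intro!: derivative_eq_intros)
qed

section \<open>Linear systems: existence by Picard iteration\<close>

lemma has_integral_power_over_fact:
  fixes a t c :: real
  assumes "a \<le> t"
  shows "((\<lambda>s. c * (s - a) ^ n / fact n) has_integral c * (t - a) ^ Suc n / fact (Suc n)) {a..t}"
proof -
  have "((\<lambda>s. c * (s - a) ^ Suc n / fact (Suc n)) has_vector_derivative
          c * (x - a) ^ n / fact n) (at x within {a..t})" for x
  proof -
    have "((\<lambda>s. (s - a) ^ Suc n) has_real_derivative Suc n * (x - a) ^ n) (at x within {a..t})"
      using DERIV_power_Suc[OF DERIV_diff[OF DERIV_ident DERIV_const]] by simp
    then have "((\<lambda>s. c * (s - a) ^ Suc n / fact (Suc n)) has_real_derivative
                 c * (Suc n * (x - a) ^ n) / fact (Suc n)) (at x within {a..t})"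
      by (intro DERIV_cdivide DERIV_cmult)
    then show ?thesis
      by (simp add: has_real_derivative_iff_has_vector_derivative fact_Suc field_simps
               del: of_nat_Suc)
  qed
  from fundamental_theorem_of_calculus[OF assms this] show ?thesis by simp
qed

lemma integral_mult_bound_power_over_fact:
  fixes r w :: "real \<Rightarrow> real"
  assumes "a \<le> t" and "continuous_on {a..t} r" and "continuous_on {a..t} w"
    and r: "\<And>s. s \<in> {a..t} \<Longrightarrow> \<bar>r s\<bar> \<le> M"
    and w: "\<And>s. s \<in> {a..t} \<Longrightarrow> \<bar>w s\<bar> \<le> M ^ n * (s - a) ^ n / fact n"
  shows "\<bar>integral {a..t} (\<lambda>s. r s * w s)\<bar> \<le> M ^ Suc n * (t - a) ^ Suc n / fact (Suc n)"
proof -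
  have "0 \<le> M" using r[of a] \<open>a \<le> t\<close> by auto
  have "\<bar>r s * w s\<bar> \<le> M ^ Suc n * (s - a) ^ n / fact n" if "s \<in> {a..t}" for s
    using mult_mono[OF r[OF that] w[OF that]] \<open>0 \<le> M\<close> by (simp add: abs_mult)
  then have "norm (integral {a..t} (\<lambda>s. r s * w s))
               \<le> integral {a..t} (\<lambda>s. M ^ Suc n * (s - a) ^ n / fact n)"
    using assms has_integral_power_over_fact
    by (intro integral_norm_bound_integral) (auto intro!: integrable_continuous_real continuous_intros)
  then show ?thesis
    using integral_unique[OF has_integral_power_over_fact[OF \<open>a \<le> t\<close>]] by simp
qed

lemma
  fixes w :: "nat \<Rightarrow> real \<Rightarrow> real"
  assumes cont: "\<And>n. continuous_on {a..b} (w n)"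
    and bound: "\<And>n s. s \<in> {a..b} \<Longrightarrow> \<bar>w n s\<bar> \<le> c n" and "summable c"
  shows continuous_on_suminf_of_dominated: "continuous_on {a..b} (\<lambda>s. \<Sum>n. w n s)"
    and sums_integral_of_dominated:
      "(\<lambda>n. integral {a..b} (w n)) sums integral {a..b} (\<lambda>s. \<Sum>n. w n s)"
proof -
  have lim: "uniform_limit {a..b} (\<lambda>n s. \<Sum>i<n. w i s) (\<lambda>s. \<Sum>i. w i s) sequentially"
    using bound \<open>summable c\<close> by (intro Weierstrass_m_test) auto
  have partial: "continuous_on {a..b} (\<lambda>s. \<Sum>i<n. w i s)" for n
    using cont by (intro continuous_intros)
  show "continuous_on {a..b} (\<lambda>s. \<Sum>n. w n s)"
    using lim partial by (intro uniform_limit_theorem) auto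
  obtain I J where I: "\<And>n. ((\<lambda>s. \<Sum>i<n. w i s) has_integral I n) {a..b}"
    and J: "((\<lambda>s. \<Sum>i. w i s) has_integral J) {a..b}" and "I \<longlonglongrightarrow> J"
    using uniform_limit_integral[OF lim partial] by auto
  moreover have "I = (\<lambda>n. \<Sum>i<n. integral {a..b} (w i))"
    using integral_unique[OF I] cont
    by (subst (asm) integral_sum) (auto intro: integrable_continuous_real)
  ultimately show "(\<lambda>n. integral {a..b} (w n)) sums integral {a..b} (\<lambda>s. \<Sum>n. w n s)"
    by (simp add: sums_def integral_unique)
qed

lemma sums_integral_mult_of_dominated:
  fixes w :: "nat \<Rightarrow> real \<Rightarrow> real"
  assumes cont: "\<And>n. continuous_on {a..b} (w n)" and "continuous_on {a..b} r"
    and bound: "\<And>n s. s \<in> {a..b} \<Longrightarrow> \<bar>w n s\<bar> \<le> c n" and "summable c"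
  shows "(\<lambda>n. integral {a..b} (\<lambda>s. r s * w n s)) sums integral {a..b} (\<lambda>s. r s * (\<Sum>n. w n s))"
proof -
  obtain K where K: "\<forall>s\<in>{a..b}. \<bar>r s\<bar> \<le> K"
    using compact_imp_bounded[OF compact_continuous_image[OF \<open>continuous_on {a..b} r\<close>]]
    unfolding bounded_real by auto
  have "summable (\<lambda>n. w n s)" if "s \<in> {a..b}" for s
    using \<open>summable c\<close> by (rule summable_comparison_test'[where N=0]) (use bound[OF that] in auto)
  then have "integral {a..b} (\<lambda>s. \<Sum>n. r s * w n s) = integral {a..b} (\<lambda>s. r s * (\<Sum>n. w n s))"
    by (intro integral_cong) (simp add: suminf_mult)
  moreover have "(\<lambda>n. integral {a..b} (\<lambda>s. r s * w n s)) sums integral {a..b} (\<lambda>s. \<Sum>n. r s * w n s)"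
  proof (rule sums_integral_of_dominated[where c="\<lambda>n. K * c n"])
    show "continuous_on {a..b} (\<lambda>s. r s * w n s)" for n
      using \<open>continuous_on {a..b} r\<close> cont by (rule continuous_on_mult)
    show "\<bar>r s * w n s\<bar> \<le> K * c n" if "s \<in> {a..b}" for n s
    proof -
      have "\<bar>r s\<bar> * \<bar>w n s\<bar> \<le> K * c n"
        using K that bound[OF that] by (intro mult_mono) auto
      then show ?thesis
        by (simp add: abs_mult)
    qed
    show "summable (\<lambda>n. K * c n)"
      using \<open>summable c\<close> by (rule summable_mult)
  qed
  ultimately show ?thesis
    by simp
qed

lemma integral_has_real_derivative_at:
  assumes "continuous_on {a..b} g" and "a < t" and "t < b"
  shows "((\<lambda>x. integral {a..x} g) has_real_derivative g t) (at t)"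
proof -
  have "at t within {a..b} = at t"
    using assms by (intro at_within_interior) auto
  moreover have "((\<lambda>x. integral {a..x} g) has_real_derivative g t) (at t within {a..b})"
    using integral_has_real_derivative[OF assms(1)] assms(2,3) by simp
  ultimately show ?thesis by simp
qed

locale linear_system =
  fixes p q :: "real \<Rightarrow> real" and t0 :: real
  assumes continuous_p: "continuous_on {t0..} p" and continuous_q: "continuous_on {t0..} q"
begin

text \<open>\<open>picard n\<close> is the \<open>n\<close>-th term (not the \<open>n\<close>-th iterate) of the Neumann series solving
  \<open>y = 1 + \<integral> p z\<close>, \<open>z = \<integral> q y\<close>; the solution is the sum of the series.\<close>

fun picard :: "nat \<Rightarrow> real \<Rightarrow> real \<times> real" where
  "picard 0 = (\<lambda>t. (1, 0))"
| "picard (Suc n) = (\<lambda>t. (integral {t0..t} (\<lambda>s. p s * snd (picard n s)),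
                           integral {t0..t} (\<lambda>s. q s * fst (picard n s))))"

definition sol_y :: "real \<Rightarrow> real" where "sol_y t = (\<Sum>n. fst (picard n t))"
definition sol_z :: "real \<Rightarrow> real" where "sol_z t = (\<Sum>n. snd (picard n t))"

lemma continuous_on_pq: "continuous_on {t0..b} p" "continuous_on {t0..b} q"
  using continuous_p continuous_q by (auto intro: continuous_on_subset)

lemma continuous_on_picard:
  "continuous_on {t0..b} (\<lambda>t. fst (picard n t)) \<and> continuous_on {t0..b} (\<lambda>t. snd (picard n t))"
proof (induction n)
  case (Suc n)
  then have "(\<lambda>s. p s * snd (picard n s)) integrable_on {t0..b}"
    "(\<lambda>s. q s * fst (picard n s)) integrable_on {t0..b}"
    using continuous_on_pq by (auto intro!: integrable_continuous_real continuous_intros)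
  then show ?case by (simp add: indefinite_integral_continuous_1)
qed simp

lemma coefficient_bound: "\<exists>M \<ge> 0. \<forall>s\<in>{t0..b}. \<bar>p s\<bar> \<le> M \<and> \<bar>q s\<bar> \<le> M"
proof -
  have "bounded (p ` {t0..b})" "bounded (q ` {t0..b})"
    using continuous_on_pq by (auto intro!: compact_imp_bounded compact_continuous_image)
  then obtain A B where "\<forall>x\<in>p ` {t0..b}. \<bar>x\<bar> \<le> A" "\<forall>x\<in>q ` {t0..b}. \<bar>x\<bar> \<le> B"
    unfolding bounded_real by blast
  then show ?thesis by (intro exI[of _ "max 0 (max A B)"]) auto
qed

lemma picard_bound:
  assumes M: "\<forall>s\<in>{t0..b}. \<bar>p s\<bar> \<le> M \<and> \<bar>q s\<bar> \<le> M" and "t \<in> {t0..b}"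
  shows "\<bar>fst (picard n t)\<bar> \<le> M ^ n * (t - t0) ^ n / fact n
       \<and> \<bar>snd (picard n t)\<bar> \<le> M ^ n * (t - t0) ^ n / fact n"
  using \<open>t \<in> {t0..b}\<close>
proof (induction n arbitrary: t)
  case (Suc n)
  have "continuous_on {t0..t} p" "continuous_on {t0..t} q"
    "continuous_on {t0..t} (\<lambda>s. fst (picard n s))" "continuous_on {t0..t} (\<lambda>s. snd (picard n s))"
    using continuous_on_pq continuous_on_picard by auto
  moreover have "\<bar>fst (picard n s)\<bar> \<le> M ^ n * (s - t0) ^ n / fact n"
    "\<bar>snd (picard n s)\<bar> \<le> M ^ n * (s - t0) ^ n / fact n" if "s \<in> {t0..t}" for s
    using Suc that by auto
  ultimately have "\<bar>integral {t0..t} (\<lambda>s. p s * snd (picard n s))\<bar>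
                     \<le> M ^ Suc n * (t - t0) ^ Suc n / fact (Suc n)"
    "\<bar>integral {t0..t} (\<lambda>s. q s * fst (picard n s))\<bar>
                     \<le> M ^ Suc n * (t - t0) ^ Suc n / fact (Suc n)"
    using Suc M by (intro integral_mult_bound_power_over_fact; auto)+
  then show ?case by (simp only: picard.simps fst_conv snd_conv)
qed simp

lemma picard_dominated:
  assumes "t0 \<le> b"
  obtains c where "summable c"
    "\<And>n s. s \<in> {t0..b} \<Longrightarrow> \<bar>fst (picard n s)\<bar> \<le> c n \<and> \<bar>snd (picard n s)\<bar> \<le> c n"
proof -
  obtain M where M: "0 \<le> M" "\<forall>s\<in>{t0..b}. \<bar>p s\<bar> \<le> M \<and> \<bar>q s\<bar> \<le> M"
    using coefficient_bound by blast
  define c where "c = (\<lambda>n. (M * (b - t0)) ^ n / fact n)"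
  have "summable c"
    using summable_exp_generic[of "M * (b - t0)"] by (simp add: c_def divide_inverse ac_simps)
  moreover have "M ^ n * (s - t0) ^ n / fact n \<le> c n" if "s \<in> {t0..b}" for n s
    unfolding c_def power_mult_distrib using that \<open>0 \<le> M\<close>
    by (intro divide_right_mono mult_left_mono power_mono) auto
  ultimately show ?thesis
    using that picard_bound[OF M(2)] by (meson order_trans)
qed

lemma continuous_on_sol: "continuous_on {t0..b} sol_y \<and> continuous_on {t0..b} sol_z"
proof (cases "t0 \<le> b")
  case True
  then obtain c where "summable c"
    "\<And>n s. s \<in> {t0..b} \<Longrightarrow> \<bar>fst (picard n s)\<bar> \<le> c n \<and> \<bar>snd (picard n s)\<bar> \<le> c n"
    using picard_dominated by blast
  then show ?thesis
    unfolding sol_y_def sol_z_def using continuous_on_picard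
    by (auto intro!: continuous_on_suminf_of_dominated[where c=c])
qed simp

lemma sol_integral_equations:
  assumes "t0 \<le> t"
  shows "sol_y t = 1 + integral {t0..t} (\<lambda>s. p s * sol_z s)"
    and "sol_z t = integral {t0..t} (\<lambda>s. q s * sol_y s)"
proof -
  obtain c where "summable c"
    and c: "\<And>n s. s \<in> {t0..t} \<Longrightarrow> \<bar>fst (picard n s)\<bar> \<le> c n \<and> \<bar>snd (picard n s)\<bar> \<le> c n"
    using picard_dominated[OF assms] by blast
  have "(\<lambda>n. integral {t0..t} (\<lambda>s. p s * snd (picard n s))) sums integral {t0..t} (\<lambda>s. p s * sol_z s)"
    unfolding sol_z_def using continuous_on_picard continuous_on_pq c
    by (intro sums_integral_mult_of_dominated[OF _ _ _ \<open>summable c\<close>]) auto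
  moreover have "(\<lambda>n. integral {t0..t} (\<lambda>s. q s * fst (picard n s))) sums integral {t0..t} (\<lambda>s. q s * sol_y s)"
    unfolding sol_y_def using continuous_on_picard continuous_on_pq c
    by (intro sums_integral_mult_of_dominated[OF _ _ _ \<open>summable c\<close>]) auto
  ultimately have "(\<lambda>n. fst (picard n t)) sums (integral {t0..t} (\<lambda>s. p s * sol_z s) + 1)"
    "(\<lambda>n. snd (picard n t)) sums (integral {t0..t} (\<lambda>s. q s * sol_y s) + 0)"
    using sums_Suc_iff[of "\<lambda>n. fst (picard n t)"] sums_Suc_iff[of "\<lambda>n. snd (picard n t)"]
    by simp_all
  then show "sol_y t = 1 + integral {t0..t} (\<lambda>s. p s * sol_z s)"
    and "sol_z t = integral {t0..t} (\<lambda>s. q s * sol_y s)"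
    unfolding sol_y_def sol_z_def by (simp_all add: sums_iff)
qed

lemma sol_has_real_derivative:
  assumes "t0 < t"
  shows "(sol_y has_real_derivative p t * sol_z t) (at t)"
    and "(sol_z has_real_derivative q t * sol_y t) (at t)"
proof -
  have cont: "continuous_on {t0..t + 1} (\<lambda>s. p s * sol_z s)"
    "continuous_on {t0..t + 1} (\<lambda>s. q s * sol_y s)"
    using continuous_on_sol continuous_on_pq by (auto intro: continuous_on_mult)
  have near: "eventually (\<lambda>u. t0 \<le> u) (nhds t)"
    using eventually_nhds_in_open[of "{t0<..}" t] assms by (auto elim: eventually_mono)
  have "((\<lambda>u. 1 + integral {t0..u} (\<lambda>s. p s * sol_z s)) has_real_derivative p t * sol_z t) (at t)"
    using integral_has_real_derivative_at[OF cont(1) assms] by (auto intro: derivative_eq_intros)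
  moreover have "eventually (\<lambda>u. sol_y u = 1 + integral {t0..u} (\<lambda>s. p s * sol_z s)) (nhds t)"
    using near by (rule eventually_mono) (rule sol_integral_equations)
  ultimately show "(sol_y has_real_derivative p t * sol_z t) (at t)"
    by (subst DERIV_cong_ev[OF refl _ refl])
  have "((\<lambda>u. integral {t0..u} (\<lambda>s. q s * sol_y s)) has_real_derivative q t * sol_y t) (at t)"
    using integral_has_real_derivative_at[OF cont(2) assms] by simp
  moreover have "eventually (\<lambda>u. sol_z u = integral {t0..u} (\<lambda>s. q s * sol_y s)) (nhds t)"
    using near by (rule eventually_mono) (rule sol_integral_equations)
  ultimately show "(sol_z has_real_derivative q t * sol_y t) (at t)"
    by (subst DERIV_cong_ev[OF refl _ refl])
qed

end

lemma linear_system_solution_exists: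
  fixes p q :: "real \<Rightarrow> real"
  assumes "continuous_on {t0..} p" and "continuous_on {t0..} q"
  obtains y z where "y t0 = 1"
    "\<And>b. continuous_on {t0..b} y" "\<And>b. continuous_on {t0..b} z"
    "\<And>t. t > t0 \<Longrightarrow> (y has_real_derivative p t * z t) (at t)"
    "\<And>t. t > t0 \<Longrightarrow> (z has_real_derivative q t * y t) (at t)"
proof -
  interpret linear_system p q t0
    using assms by unfold_locales
  show ?thesis
    using that[of sol_y sol_z] sol_integral_equations[of t0] continuous_on_sol sol_has_real_derivative
    by simp
qed

section \<open>Regularity and oscillation of solutions\<close>

lemma linear_system_solution_smooth:
  assumes "germ_Cinf p" and "germ_Cinf q"
    and y': "\<And>t. t > a \<Longrightarrow> (y has_real_derivative p t * z t) (at t)"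
    and z': "\<And>t. t > a \<Longrightarrow> (z has_real_derivative q t * y t) (at t)"
  shows "germ_Cinf y"
proof -
  have "eventually (\<lambda>b. a \<le> b \<and> C_on n b y \<and> C_on n b z) at_top" for n
  proof (induction n)
    case 0
    have "isCont y t" "isCont z t" if "a < t" for t
      using DERIV_isCont y' z' that by blast+
    then have "continuous_on {b<..} y" "continuous_on {b<..} z" if "a \<le> b" for b
      using that by (auto intro!: continuous_at_imp_continuous_on)
    then show ?case
      by (auto simp: C_on_0 eventually_at_top_linorder)
  next
    case (Suc n)
    moreover have "eventually (\<lambda>b. C_on n b p \<and> C_on n b q) at_top"
      using assms(1,2) by (auto simp: germ_Cinf_def germ_C_iff_eventually intro: eventually_conj)
    ultimately show ?case
      by eventually_elim
         (auto intro!: C_on_Suc_of_derivative[OF y'] C_on_Suc_of_derivative[OF z'] C_on_mult)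
  qed
  then show ?thesis
    unfolding germ_Cinf_def germ_C_iff_eventually by (metis (mono_tags, lifting) eventually_mono)
qed

lemma linear_system_solution_nonvanishing:
  fixes y z p q :: "real \<Rightarrow> real"
  assumes "t0 \<le> s" and "y t0 = 1"
    and "continuous_on {t0..s} y" "continuous_on {t0..s} z"
    and "continuous_on {t0..s} p" "continuous_on {t0..s} q"
    and y': "\<And>t. t0 < t \<Longrightarrow> t < s \<Longrightarrow> (y has_real_derivative p t * z t) (at t)"
    and z': "\<And>t. t0 < t \<Longrightarrow> t < s \<Longrightarrow> (z has_real_derivative q t * y t) (at t)"
  shows "y s ^ 2 + z s ^ 2 > 0"
proof -
  have "bounded ((\<lambda>x. p x + q x) ` {t0..s})"
    using assms by (intro compact_imp_bounded compact_continuous_image continuous_intros) auto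
  then obtain K where K: "\<forall>x\<in>{t0..s}. \<bar>p x + q x\<bar> \<le> K"
    unfolding bounded_real by auto
  define h where "h t = (y t ^ 2 + z t ^ 2) * exp (K * t)" for t
  \<comment> \<open>Gronwall: the damped energy \<open>h\<close> is nondecreasing since \<open>|(y\<^sup>2 + z\<^sup>2)'| \<le> K (y\<^sup>2 + z\<^sup>2)\<close>.\<close>
  have "h t0 \<le> h s"
  proof (rule DERIV_nonneg_imp_increasing_open[OF \<open>t0 \<le> s\<close>])
    fix x assume x: "t0 < x" "x < s"
    let ?w = "y x ^ 2 + z x ^ 2"
    have "(h has_real_derivative
           (2 * y x * z x * (p x + q x) + ?w * K) * exp (K * x)) (at x)"
      unfolding h_def
      by (auto intro!: derivative_eq_intros y'[OF x] z'[OF x] simp: algebra_simps)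
    moreover have "\<bar>2 * y x * z x\<bar> \<le> ?w"
      using sum_squares_bound[of "y x" "z x"] sum_squares_bound[of "y x" "- z x"] by auto
    then have "\<bar>2 * y x * z x * (p x + q x)\<bar> \<le> ?w * K"
      unfolding abs_mult[of "2 * y x * z x"] using K x by (intro mult_mono) auto
    then have "0 \<le> (2 * y x * z x * (p x + q x) + ?w * K) * exp (K * x)"
      by simp
    ultimately show "\<exists>D. (h has_real_derivative D) (at x) \<and> 0 \<le> D"
      by blast
  qed (use assms in \<open>auto simp: h_def intro!: continuous_intros\<close>)
  moreover have "h t0 > 0"
    using \<open>y t0 = 1\<close> by (simp add: h_def add_pos_nonneg)
  ultimately have "h s > 0"
    by linarith
  then show ?thesis
    by (simp add: h_def zero_less_mult_iff)
qed

lemma linear_system_solution_frequently_nonzero: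
  fixes y z p q :: "real \<Rightarrow> real"
  assumes "y t0 = 1"
    and "\<And>b. continuous_on {t0..b} y" "\<And>b. continuous_on {t0..b} z"
    and "\<And>b. continuous_on {t0..b} p" "\<And>b. continuous_on {t0..b} q"
    and y': "\<And>t. t > t0 \<Longrightarrow> (y has_real_derivative p t * z t) (at t)"
    and z': "\<And>t. t > t0 \<Longrightarrow> (z has_real_derivative q t * y t) (at t)"
    and p: "\<And>t. t > t0 \<Longrightarrow> p t \<noteq> 0"
  shows "frequently (\<lambda>t. y t \<noteq> 0) at_top"
proof (rule ccontr)
  assume "\<not> frequently (\<lambda>t. y t \<noteq> 0) at_top"
  then obtain T where T: "\<And>t. t \<ge> T \<Longrightarrow> y t = 0"
    unfolding not_frequently eventually_at_top_linorder by auto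
  define s where "s = max T t0 + 1"
  have "eventually (\<lambda>x. x \<in> {T<..}) (nhds s)"
    by (rule eventually_nhds_in_open) (auto simp: s_def)
  then have "eventually (\<lambda>x. y x = 0) (nhds s)"
    by (rule eventually_mono) (simp add: T)
  from DERIV_cong_ev[OF refl this refl] have "(y has_real_derivative 0) (at s)"
    by (simp add: DERIV_const)
  moreover have "(y has_real_derivative p s * z s) (at s)"
    using y' by (simp add: s_def)
  ultimately have "p s * z s = 0"
    using DERIV_unique by blast
  then have "y s ^ 2 + z s ^ 2 = 0"
    using p[of s] T[of s] by (simp add: s_def)
  moreover have "y s ^ 2 + z s ^ 2 > 0"
    by (rule linear_system_solution_nonvanishing[where p=p and q=q]) (use assms in \<open>auto simp: s_def\<close>)
  ultimately show False
    by simp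
qed

lemma bounded_above_of_riccati_inequality:
  fixes u F p :: "real \<Rightarrow> real"
  assumes "T \<le> t"
    and u: "\<And>x. x \<ge> T \<Longrightarrow> (u has_real_derivative u' x) (at x) \<and> u x > 0 \<and> p x * u x ^ 2 \<le> u' x"
    and F: "\<And>x. x \<ge> T \<Longrightarrow> (F has_real_derivative p x) (at x)"
  shows "F t \<le> F T + inverse (u T)"
proof -
  define \<phi> where "\<phi> x = - inverse (u x) - F x" for x
  have "\<phi> T \<le> \<phi> t"
  proof (rule DERIV_nonneg_imp_nondecreasing[OF \<open>T \<le> t\<close>])
    fix x assume "T \<le> x" "x \<le> t"
    then have ux: "(u has_real_derivative u' x) (at x)" "u x > 0" "p x \<le> u' x / u x ^ 2"
      using u[of x] by (auto simp: field_simps)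
    have "(\<phi> has_real_derivative u' x / u x ^ 2 - p x) (at x)"
      unfolding \<phi>_def using ux F[of x] \<open>T \<le> x\<close>
      by (auto intro!: derivative_eq_intros simp: field_simps power2_eq_square)
    with ux show "\<exists>D. (\<phi> has_real_derivative D) (at x) \<and> 0 \<le> D"
      by auto
  qed
  moreover have "inverse (u t) > 0"
    using u[of t] \<open>T \<le> t\<close> by simp
  ultimately show ?thesis
    unfolding \<phi>_def by linarith
qed

lemma riccati_solution_eventually_below:
  fixes v p g G :: "real \<Rightarrow> real"
  assumes p: "continuous_on {a<..} p" "\<And>t. t > a \<Longrightarrow> p t \<ge> 0"
    and v': "\<And>t. t > a \<Longrightarrow> (v has_real_derivative - g t - p t * v t ^ 2) (at t)"
    and G': "\<And>t. t > a \<Longrightarrow> (G has_real_derivative g t) (at t)" and G: "filterlim G at_top at_top"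
  obtains R T where "T > a" "\<And>t. t \<ge> T \<Longrightarrow> (R has_real_derivative p t * v t ^ 2) (at t)"
    "\<And>t. R t \<ge> 0" "\<And>t. t \<ge> T \<Longrightarrow> v t \<le> - (1 + R t)"
proof -
  define b where "b = a + 1"
  define R where "R t = integral {b..t} (\<lambda>s. p s * v s ^ 2)" for t
  have "continuous_on {b..c} v" for c
    using v' DERIV_isCont by (force simp: b_def intro!: continuous_at_imp_continuous_on)
  then have cont: "continuous_on {b..c} (\<lambda>s. p s * v s ^ 2)" for c
    using p(1) by (auto simp: b_def intro!: continuous_intros intro: continuous_on_subset)
  have R': "(R has_real_derivative p t * v t ^ 2) (at t)" if "t > b" for t
    unfolding R_def using integral_has_real_derivative_at[OF cont that, of "t + 1"] by simp
  have R_nonneg: "R t \<ge> 0" for t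
    unfolding R_def
  proof (rule integral_nonneg)
    show "(\<lambda>s. p s * v s ^ 2) integrable_on {b..t}"
      using cont by (rule integrable_continuous_real)
    show "0 \<le> p s * v s ^ 2" if "s \<in> {b..t}" for s
      using p(2)[of s] that by (simp add: b_def)
  qed
  define c where "c = v (b + 1) + G (b + 1) + R (b + 1)"
  have first_integral: "v t + G t + R t = c" if "t > b" for t
    unfolding c_def
  proof (rule DERIV_isconst3[where f="\<lambda>x. v x + G x + R x" and a=b and b="max t (b + 1) + 1"])
    fix x assume "x \<in> {b<..<max t (b + 1) + 1}"
    then have "((\<lambda>x. v x + G x + R x) has_real_derivative
                 (- g x - p x * v x ^ 2) + g x + p x * v x ^ 2) (at x)"
      using v' G' R' by (intro DERIV_add) (auto simp: b_def)
    then show "((\<lambda>x. v x + G x + R x) has_real_derivative 0) (at x)"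
      by simp
  qed (use that in auto)
  have "eventually (\<lambda>t. b + 1 \<le> t \<and> c + 1 \<le> G t) at_top"
    using G by (auto simp: filterlim_at_top intro: eventually_conj eventually_ge_at_top)
  then obtain T where T: "\<And>t. t \<ge> T \<Longrightarrow> b + 1 \<le> t \<and> c + 1 \<le> G t"
    unfolding eventually_at_top_linorder by blast
  show ?thesis
  proof (rule that[of T R])
    show "T > a" "\<And>t. t \<ge> T \<Longrightarrow> (R has_real_derivative p t * v t ^ 2) (at t)"
      using T[of T] T R' by (auto simp: b_def)
    show "v t \<le> - (1 + R t)" if "t \<ge> T" for t
      using T[OF that] first_integral[of t] by simp
  qed (rule R_nonneg)
qed

lemma riccati_equation_no_solution_on_tail:
  fixes v p g F G :: "real \<Rightarrow> real"
  assumes p: "continuous_on {a<..} p" "\<And>t. t > a \<Longrightarrow> p t > 0"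
    and v': "\<And>t. t > a \<Longrightarrow> (v has_real_derivative - g t - p t * v t ^ 2) (at t)"
    and F': "\<And>t. t > a \<Longrightarrow> (F has_real_derivative p t) (at t)" and F: "filterlim F at_top at_top"
    and G': "\<And>t. t > a \<Longrightarrow> (G has_real_derivative g t) (at t)" and G: "filterlim G at_top at_top"
  shows False
proof -
  obtain R T where "T > a" and R': "\<And>t. t \<ge> T \<Longrightarrow> (R has_real_derivative p t * v t ^ 2) (at t)"
    and R_nonneg: "\<And>t. R t \<ge> 0" and v_le: "\<And>t. t \<ge> T \<Longrightarrow> v t \<le> - (1 + R t)"
    using riccati_solution_eventually_below[OF p(1) _ v' G' G] p(2) by (metis less_imp_le)
  have "p x * (1 + R x) ^ 2 \<le> p x * v x ^ 2" if "x \<ge> T" for x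
  proof -
    have "1 + R x \<le> - v x"
      using v_le[OF that] by simp
    then have "(1 + R x) ^ 2 \<le> v x ^ 2"
      using R_nonneg[of x] power_mono[of "1 + R x" "- v x" 2] by simp
    then show ?thesis
      using p(2)[of x] that \<open>T > a\<close> by (intro mult_left_mono) auto
  qed
  then have "F t \<le> F T + inverse (1 + R T)" if "t \<ge> T" for t
    using that R' R_nonneg F' \<open>T > a\<close>
    by (intro bounded_above_of_riccati_inequality[where u'="\<lambda>x. p x * v x ^ 2"])
       (auto intro!: derivative_eq_intros add_pos_nonneg)
  moreover have "eventually (\<lambda>t. T \<le> t \<and> F T + inverse (1 + R T) < F t) at_top"
    using F by (auto simp: filterlim_at_top_dense intro: eventually_conj eventually_ge_at_top)
  then obtain t where "T \<le> t" "F T + inverse (1 + R T) < F t"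
    using eventually_happens by fastforce
  ultimately show False
    by fastforce
qed

lemma linear_system_solution_frequently_zero:
  fixes y z p g F G :: "real \<Rightarrow> real"
  assumes p: "continuous_on {a<..} p" "\<And>t. t > a \<Longrightarrow> p t > 0"
    and y': "\<And>t. t > a \<Longrightarrow> (y has_real_derivative p t * z t) (at t)"
    and z': "\<And>t. t > a \<Longrightarrow> (z has_real_derivative - g t * y t) (at t)"
    and F': "\<And>t. t > a \<Longrightarrow> (F has_real_derivative p t) (at t)" and F: "filterlim F at_top at_top"
    and G': "\<And>t. t > a \<Longrightarrow> (G has_real_derivative g t) (at t)" and G: "filterlim G at_top at_top"
  shows "frequently (\<lambda>t. y t = 0) at_top"
proof (rule ccontr)
  assume "\<not> frequently (\<lambda>t. y t = 0) at_top"
  then obtain T where T: "\<And>t. t \<ge> T \<Longrightarrow> y t \<noteq> 0"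
    unfolding not_frequently eventually_at_top_linorder by auto
  define b where "b = max a T"
  have "((\<lambda>t. z t / y t) has_real_derivative - g t - p t * (z t / y t) ^ 2) (at t)" if "t > b" for t
  proof -
    have "y t \<noteq> 0" "t > a"
      using T that by (auto simp: b_def)
    then show ?thesis
      using DERIV_divide[OF z' y'] by (simp add: field_simps power2_eq_square)
  qed
  then show False
    using p y' F' F G' G
    by (intro riccati_equation_no_solution_on_tail[where a=b and v="\<lambda>t. z t / y t" and g=g and p=p and F=F and G=G])
       (auto simp: b_def intro: continuous_on_subset)
qed

lemma nonzero_of_continuous_inverse:
  fixes f :: "real \<Rightarrow> real"
  assumes "continuous_on {a<..} f" and "continuous_on {a<..} (\<lambda>t. inverse (f t))"
    and "s > a" and "f s \<noteq> 0" and "t > a"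
  shows "f t \<noteq> 0"
proof -
  \<comment> \<open>\<open>f \<cdot> f\<inverse>\<close> takes only the values 0 and 1, so it is constant on the connected set.\<close>
  have "(\<lambda>t. f t * inverse (f t)) ` {a<..} \<subseteq> {0, 1}"
    by auto
  then have "(\<lambda>t. f t * inverse (f t)) constant_on {a<..}"
    using assms(1,2)
    by (intro continuous_finite_range_constant continuous_on_mult) (auto intro: finite_subset)
  then have "f t * inverse (f t) = f s * inverse (f s)"
    using assms(3,5) unfolding constant_on_def by (metis greaterThan_iff)
  then show ?thesis
    using \<open>f s \<noteq> 0\<close> by auto
qed

lemma positive_of_inverse_antiderivative_tendsto:
  fixes f F :: "real \<Rightarrow> real"
  assumes "continuous_on {a<..} f" and f: "\<And>t. t > a \<Longrightarrow> f t \<noteq> 0"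
    and F': "\<And>t. t > a \<Longrightarrow> (F has_real_derivative inverse (f t)) (at t)"
    and F: "filterlim F at_top at_top" and "t > a"
  shows "f t > 0"
proof (rule ccontr)
  assume "\<not> f t > 0"
  then have "f t < 0"
    using f[OF \<open>t > a\<close>] by linarith
  have "f s < 0" if st: "s \<ge> t" for s
  proof (rule ccontr)
    assume "\<not> f s < 0"
    moreover have "continuous_on {t..s} f"
      using assms(1) by (rule continuous_on_subset) (use \<open>t > a\<close> in auto)
    ultimately obtain x where "t \<le> x" "x \<le> s" "f x = 0"
      using IVT'[of f t 0 s] \<open>f t < 0\<close> st by auto
    with f[of x] \<open>t > a\<close> show False
      by simp
  qed
  then have "F s \<le> F t" if "s \<ge> t" for s
  proof (intro DERIV_nonpos_imp_nonincreasing[OF that] exI conjI)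
    fix x assume "t \<le> x"
    with \<open>t > a\<close> show "(F has_real_derivative inverse (f x)) (at x)" "inverse (f x) \<le> 0"
      using F' \<open>\<And>s. s \<ge> t \<Longrightarrow> f s < 0\<close>[of x] by auto
  qed
  moreover have "eventually (\<lambda>s. t \<le> s \<and> F t < F s) at_top"
    using F by (auto simp: filterlim_at_top_dense intro: eventually_conj eventually_ge_at_top)
  ultimately show False
    using eventually_happens by fastforce
qed

lemma second_order_equation_of_linear_system:
  fixes y z f g :: "real \<Rightarrow> real"
  assumes y': "\<And>s. s > a \<Longrightarrow> (y has_real_derivative inverse (f s) * z s) (at s)"
    and z': "(z has_real_derivative - g t * y t) (at t)"
    and f': "(f has_real_derivative deriv f t) (at t)" and "f t \<noteq> 0" and "t > a"
  shows "f t * deriv (deriv y) t + deriv f t * deriv y t + g t * y t = 0"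
proof -
  have "eventually (\<lambda>s. s \<in> {a<..}) (nhds t)"
    using \<open>t > a\<close> by (intro eventually_nhds_in_open) auto
  then have "eventually (\<lambda>s. deriv y s = inverse (f s) * z s) (nhds t)"
    by (rule eventually_mono) (auto intro: DERIV_imp_deriv y')
  then have "deriv (deriv y) t = deriv (\<lambda>s. inverse (f s) * z s) t"
    by (rule deriv_cong_ev) simp
  also have "\<dots> = - (deriv f t * inverse (f t ^ Suc (Suc 0))) * z t + (- g t * y t) * inverse (f t)"
    by (rule DERIV_imp_deriv[OF DERIV_mult[OF DERIV_inverse_fun[OF f' \<open>f t \<noteq> 0\<close>] z']])
  finally have y'': "deriv (deriv y) t = \<dots>" .
  have "z t = f t * deriv y t"
    using DERIV_imp_deriv[OF y'[OF \<open>t > a\<close>]] \<open>f t \<noteq> 0\<close> by simp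
  with y'' have "f t * (f t * deriv (deriv y) t + deriv f t * deriv y t + g t * y t) = 0"
    using \<open>f t \<noteq> 0\<close> by (simp add: field_simps power2_eq_square)
  then show ?thesis
    using \<open>f t \<noteq> 0\<close> by simp
qed

theorem oscillating_solution_exists:
  fixes f g F G :: "real \<Rightarrow> real"
  assumes smooth: "germ_Cinf (\<lambda>t. inverse (f t))" "germ_Cinf (\<lambda>t. - g t)"
    and f: "\<And>t. t > a \<Longrightarrow> f t \<noteq> 0" "\<And>t. t > a \<Longrightarrow> (f has_real_derivative deriv f t) (at t)"
    and cont: "continuous_on {a<..} (\<lambda>t. inverse (f t))" "continuous_on {a<..} g"
    and F': "\<And>t. t > a \<Longrightarrow> (F has_real_derivative inverse (f t)) (at t)"
    and F: "filterlim F at_top at_top"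
    and G': "\<And>t. t > a \<Longrightarrow> (G has_real_derivative g t) (at t)"
    and G: "filterlim G at_top at_top"
  shows "\<exists>y. germ_Cinf y \<and> oscillates y \<and>
           eventually (\<lambda>t. f t * deriv (deriv y) t + deriv f t * deriv y t + g t * y t = 0) at_top"
proof -
  have "isCont f t" if "t > a" for t
    using f(2)[OF that] by (rule DERIV_isCont)
  then have "continuous_on {a<..} f"
    by (intro continuous_at_imp_continuous_on) auto
  then have f_pos: "f t > 0" if "t > a" for t
    by (rule positive_of_inverse_antiderivative_tendsto[OF _ f(1) F' F that])
  define t0 where "t0 = a + 1"
  have sub: "{t0..b} \<subseteq> {a<..}" "{t0..} \<subseteq> {a<..}" "{t0<..} \<subseteq> {a<..}" for b
    by (auto simp: t0_def)
  have cont_t0: "continuous_on {t0..} (\<lambda>t. inverse (f t))" "continuous_on {t0..} (\<lambda>t. - g t)"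
    using continuous_on_subset[OF cont(1) sub(2)] continuous_on_minus[OF continuous_on_subset[OF cont(2) sub(2)]]
    by auto
  obtain y z where "y t0 = 1" "\<And>b. continuous_on {t0..b} y" "\<And>b. continuous_on {t0..b} z"
    and y': "\<And>t. t > t0 \<Longrightarrow> (y has_real_derivative inverse (f t) * z t) (at t)"
    and z': "\<And>t. t > t0 \<Longrightarrow> (z has_real_derivative - g t * y t) (at t)"
    using linear_system_solution_exists[OF cont_t0] by blast
  have "germ_Cinf y"
    using smooth y' z' by (rule linear_system_solution_smooth)
  moreover have "frequently (\<lambda>t. y t \<noteq> 0) at_top"
  proof (rule linear_system_solution_frequently_nonzero[where z=z])
    show "continuous_on {t0..b} (\<lambda>t. inverse (f t))" "continuous_on {t0..b} (\<lambda>t. - g t)" for b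
      using cont_t0 by (auto intro: continuous_on_subset)
    show "inverse (f t) \<noteq> 0" if "t > t0" for t
      using f(1)[of t] that by (simp add: t0_def)
  qed fact+
  moreover have "frequently (\<lambda>t. y t = 0) at_top"
  proof (rule linear_system_solution_frequently_zero[where F=F and G=G])
    show "continuous_on {t0<..} (\<lambda>t. inverse (f t))"
      using cont(1) sub(3) by (rule continuous_on_subset)
  qed (use y' z' F' F G' G f_pos in \<open>auto simp: t0_def\<close>)
  moreover have "eventually (\<lambda>t. f t * deriv (deriv y) t + deriv f t * deriv y t + g t * y t = 0) at_top"
  proof (rule eventually_mono[OF eventually_gt_at_top[of t0]])
    fix t assume "t > t0"
    then show "f t * deriv (deriv y) t + deriv f t * deriv y t + g t * y t = 0"
      using f y' z' by (intro second_order_equation_of_linear_system[where a=t0]) (auto simp: t0_def)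
  qed
  ultimately show ?thesis
    unfolding oscillates_def by blast
qed

theorem mainTheorem15:
  fixes H :: "(real \<Rightarrow> real) set" and f g :: "real \<Rightarrow> real"
  assumes "hardy_field H"
    and "f \<in> H" and "\<not> eventually (\<lambda>t. f t = 0) at_top"
    and "g \<in> H"
    and "\<exists>F. germ_C 1 F \<and> eventually (\<lambda>t. deriv F t = inverse (f t)) at_top
              \<and> filterlim F at_top at_top"
    and "\<exists>G. germ_C 1 G \<and> eventually (\<lambda>t. deriv G t = g t) at_top
              \<and> filterlim G at_top at_top"
  shows "\<exists>y. germ_Cinf y \<and> oscillates y \<and>
           eventually (\<lambda>t. f t * deriv (deriv y) t + deriv f t * deriv y t + g t * y t = 0) at_top"
proof -
  obtain F G where F: "germ_C 1 F" "eventually (\<lambda>t. deriv F t = inverse (f t)) at_top"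
      "filterlim F at_top at_top"
    and G: "germ_C 1 G" "eventually (\<lambda>t. deriv G t = g t) at_top" "filterlim G at_top at_top"
    using assms(5,6) by blast
  have smooth: "germ_Cinf f" "germ_Cinf (\<lambda>t. inverse (f t))" "germ_Cinf g" "germ_Cinf (\<lambda>t. - g t)"
    using assms(1-4) unfolding hardy_field_def by auto
  have "eventually (\<lambda>a. C_on 1 a f \<and> C_on 0 a (\<lambda>t. inverse (f t)) \<and> C_on 0 a g \<and> C_on 1 a F
          \<and> C_on 1 a G \<and> (\<forall>t\<ge>a. deriv F t = inverse (f t) \<and> deriv G t = g t)) at_top"
    using smooth(1-3)[unfolded germ_Cinf_def, rule_format, unfolded germ_C_iff_eventually]
      F(1) G(1) eventually_all_ge_at_top[OF eventually_conj[OF F(2) G(2)]]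
    by (intro eventually_conj) (simp_all add: germ_C_iff_eventually)
  then obtain a where a: "C_on 1 a f" "C_on 0 a (\<lambda>t. inverse (f t))" "C_on 0 a g"
      "C_on 1 a F" "C_on 1 a G" "\<And>t. t \<ge> a \<Longrightarrow> deriv F t = inverse (f t) \<and> deriv G t = g t"
    unfolding eventually_at_top_linorder by blast
  obtain s where s: "s > a" "f s \<noteq> 0"
    using assms(3) unfolding eventually_at_top_dense by blast
  have "f t \<noteq> 0" if "t > a" for t
    using a(2) unfolding C_on_0
    by (rule nonzero_of_continuous_inverse[OF C_on_imp_continuous_on[OF a(1)] _ s that])
  moreover have "(F has_real_derivative inverse (f t)) (at t)" "(G has_real_derivative g t) (at t)"
    "(f has_real_derivative deriv f t) (at t)" if "t > a" for t
    using a(1,4,5) a(6)[of t] that by (auto simp: C_on_Suc)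
  ultimately show ?thesis
    using a(2,3) smooth(2,4) F(3) G(3) unfolding C_on_0
    by (intro oscillating_solution_exists[where a=a and F=F and G=G])
qed

end
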